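(* Let $A=(a_{\ell,r})$ be an $n\times n$ flat matrix and $H=(h_{\ell,k})$ an $n\times n$ matrix whose entries all have absolute value $1$ and whose rows are pairwise orthogonal. For $r=1,\dots,n$ let $M_r$ be the $n\times n$ matrix with entries $(M_r)_{\ell,k}=\frac1{\sqrt n}a_{\ell,r}h_{\ell,k}$, i.e. $M_r=\frac1{\sqrt n}\operatorname{diag}(v_r)H$ where $v_r$ is the $r$-th column of $A$. Then $\{M_1,\dots,M_n\}$ is a complete system of mutually unbiased Hadamards if and only if every pair of distinct vertices of the vertex set $V_n$ is adjacent in $L(A)$ or in $L(H)$ (i.e. $L(A)$ and $L(H)$ together cover the complete graph on $V_n$).
   Context: A flat matrix is a complex matrix all of whose entries have absolute value $1$. For an $n\times n$ complex matrix $C$ with rows $c_1,\dots,c_n$, its L-graph $L(C)$ is the simple graph on the vertex set $V_n$ of all 2-element multisets $\{i,j\}$ with $1\le i\le j\le n$, in which distinct vertices $\{i,j\}$ and $\{k,l\}$ are adjacent iff $\langle c_i\circ c_j | c_k\circ c_l\rangle=0$; here $\circ$ is the entrywise product and $\langle x|y\rangle=\sum_t\overline{x_t}y_t$. A complex Hadamard matrix is a unitary $n\times n$ matrix all of whose entries have absolute value $1/\sqrt n$; two are mutually unbiased if $|\langle x|y\rangle|=1/\sqrt n$ for every column $x$ of one and column $y$ of the other; a complete system of mutually unbiased Hadamards is a set of $n$ pairwise mutually unbiased complex Hadamard $n\times n$ matrices. *)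

theory Defs
  imports Jordan_Normal_Form.Schur_Decomposition
begin

text \<open>Matrices are Jordan_Normal_Form matrices; indices are 0-based.\<close>

definition cinner :: "complex vec \<Rightarrow> complex vec \<Rightarrow> complex" where
  "cinner x y = (\<Sum>t<dim_vec x. cnj (x $ t) * y $ t)"

definition entrywise_prod :: "complex vec \<Rightarrow> complex vec \<Rightarrow> complex vec" where
  "entrywise_prod x y = vec (dim_vec x) (\<lambda>t. x $ t * y $ t)"

definition flat_mat :: "complex mat \<Rightarrow> bool" where
  "flat_mat C \<longleftrightarrow> (\<forall>i<dim_row C. \<forall>j<dim_col C. cmod (C $$ (i,j)) = 1)"

text \<open>Vertex set V_n: 2-element multisets {i,j}, represented by pairs (i,j) with i \<le> j < n.\<close>
definition Lverts :: "nat \<Rightarrow> (nat \<times> nat) set" where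
  "Lverts n = {(i,j). i \<le> j \<and> j < n}"

definition L_adj :: "complex mat \<Rightarrow> nat \<times> nat \<Rightarrow> nat \<times> nat \<Rightarrow> bool" where
  "L_adj C u v \<longleftrightarrow> u \<noteq> v \<and>
     cinner (entrywise_prod (row C (fst u)) (row C (snd u)))
            (entrywise_prod (row C (fst v)) (row C (snd v))) = 0"

definition complex_hadamard :: "nat \<Rightarrow> complex mat \<Rightarrow> bool" where
  "complex_hadamard n M \<longleftrightarrow> M \<in> carrier_mat n n \<and> mat_adjoint M * M = 1\<^sub>m n \<and>
     (\<forall>i<n. \<forall>j<n. cmod (M $$ (i,j)) = 1 / sqrt (real n))"

definition mutually_unbiased :: "nat \<Rightarrow> complex mat \<Rightarrow> complex mat \<Rightarrow> bool" where
  "mutually_unbiased n M M' \<longleftrightarrow>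
     (\<forall>k<n. \<forall>l<n. cmod (cinner (col M k) (col M' l)) = 1 / sqrt (real n))"

definition complete_MUH_system :: "nat \<Rightarrow> complex mat set \<Rightarrow> bool" where
  "complete_MUH_system n S \<longleftrightarrow> card S = n \<and> (\<forall>M\<in>S. complex_hadamard n M) \<and>
     (\<forall>M\<in>S. \<forall>M'\<in>S. M \<noteq> M' \<longrightarrow> mutually_unbiased n M M')"

end

theory Submission
  imports Defs
begin

(* Write M_r = diag(A e_r) H / sqrt n and X_{r,s,k,l} = n <col_k M_r | col_l M_s>
   = sum_t conj(a_tr) a_ts conj(h_tk) h_tl.  Each M_r is a complex Hadamard
   matrix, and {M_r} is a complete system of mutually unbiased Hadamards iff
   |X_{r,s,k,l}|^2 = n whenever r <> s.  The proof is a variance argument: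
   (1) by orthogonality of the rows of H, sum_{k,l} |X_{r,s,k,l}|^2 = n^3;
   (2) expanding fourth powers, sum_{r,s,k,l} |X_{r,s,k,l}|^4 equals
       sum over ordered pairs of vertices v, v' of |G_A(v,v')|^2 |G_H(v,v')|^2,
       where G_C(v,v') is the inner product defining adjacency in L(C);
   (3) the diagonal terms (r = s, resp. v = v' as multisets) are known exactly,
       so sum_{r<>s} (|X|^2 - n)^2 equals the sum of |G_A|^2 |G_H|^2 over pairs
       of distinct vertices.  Both sides are sums of nonnegative terms, hence
       the system is mutually unbiased iff every pair of distinct vertices is
       adjacent in L(A) or in L(H). *)

lemma quartic_expand:
  fixes x :: "'a \<Rightarrow> complex"
  shows "(sum x T * cnj (sum x T))^2 =
    (\<Sum>t\<in>T. \<Sum>t'\<in>T. \<Sum>u\<in>T. \<Sum>u'\<in>T. x t * x t' * cnj (x u) * cnj (x u'))"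
proof -
  have "(sum x T * cnj (sum x T))^2 = (sum x T * sum x T) * (cnj (sum x T) * cnj (sum x T))"
    by (simp add: power2_eq_square mult_ac)
  also have "\<dots> = (\<Sum>t\<in>T. \<Sum>t'\<in>T. x t * x t') * (\<Sum>u\<in>T. \<Sum>u'\<in>T. cnj (x u) * cnj (x u'))"
    by (simp only: sum_product cnj_sum)
  also have "\<dots> = (\<Sum>t\<in>T. \<Sum>t'\<in>T. \<Sum>u\<in>T. \<Sum>u'\<in>T. x t * x t' * (cnj (x u) * cnj (x u')))"
    unfolding sum_distrib_right unfolding sum_distrib_left ..
  finally show ?thesis by (simp only: mult.assoc)
qed

lemma second_moment_bilinear:
  fixes x :: "'t \<Rightarrow> complex" and Y :: "'q \<Rightarrow> 't \<Rightarrow> complex"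
  shows "(\<Sum>q\<in>Q. (\<Sum>t\<in>T. x t * Y q t) * cnj (\<Sum>t\<in>T. x t * Y q t)) =
    (\<Sum>t\<in>T. \<Sum>u\<in>T. x t * cnj (x u) * (\<Sum>q\<in>Q. Y q t * cnj (Y q u)))"
proof -
  have "(\<Sum>q\<in>Q. (\<Sum>t\<in>T. x t * Y q t) * cnj (\<Sum>t\<in>T. x t * Y q t)) =
      (\<Sum>q\<in>Q. \<Sum>t\<in>T. \<Sum>u\<in>T. (x t * Y q t) * cnj (x u * Y q u))"
    by (simp only: sum_product cnj_sum)
  also have "\<dots> = (\<Sum>t\<in>T. \<Sum>u\<in>T. \<Sum>q\<in>Q. (x t * cnj (x u)) * (Y q t * cnj (Y q u)))"
    by (simp only: sum.swap[where A = Q] complex_cnj_mult mult_ac)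
  also have "\<dots> = (\<Sum>t\<in>T. \<Sum>u\<in>T. x t * cnj (x u) * (\<Sum>q\<in>Q. Y q t * cnj (Y q u)))"
    by (simp only: sum_distrib_left)
  finally show ?thesis .
qed

lemma fourth_moment_bilinear:
  fixes X :: "'p \<Rightarrow> 't \<Rightarrow> complex" and Y :: "'q \<Rightarrow> 't \<Rightarrow> complex"
  shows "(\<Sum>p\<in>P. \<Sum>q\<in>Q. ((\<Sum>t\<in>T. X p t * Y q t) * cnj (\<Sum>t\<in>T. X p t * Y q t))^2) =
    (\<Sum>t\<in>T. \<Sum>t'\<in>T. \<Sum>u\<in>T. \<Sum>u'\<in>T.
       (\<Sum>p\<in>P. X p t * X p t' * cnj (X p u) * cnj (X p u')) *
       (\<Sum>q\<in>Q. Y q t * Y q t' * cnj (Y q u) * cnj (Y q u')))"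
proof -
  have "(\<Sum>p\<in>P. \<Sum>q\<in>Q. ((\<Sum>t\<in>T. X p t * Y q t) * cnj (\<Sum>t\<in>T. X p t * Y q t))^2) =
    (\<Sum>p\<in>P. \<Sum>q\<in>Q. \<Sum>t\<in>T. \<Sum>t'\<in>T. \<Sum>u\<in>T. \<Sum>u'\<in>T.
       (X p t * X p t' * cnj (X p u) * cnj (X p u')) * (Y q t * Y q t' * cnj (Y q u) * cnj (Y q u')))"
    unfolding quartic_expand by (intro sum.cong refl) (simp add: mult_ac)
  also have "\<dots> = (\<Sum>t\<in>T. \<Sum>t'\<in>T. \<Sum>u\<in>T. \<Sum>u'\<in>T. \<Sum>p\<in>P. \<Sum>q\<in>Q.
       (X p t * X p t' * cnj (X p u) * cnj (X p u')) * (Y q t * Y q t' * cnj (Y q u) * cnj (Y q u')))"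
    by (simp only: sum.swap[where A = Q and B = T]) (simp only: sum.swap[where A = P and B = T])
  also have "\<dots> = (\<Sum>t\<in>T. \<Sum>t'\<in>T. \<Sum>u\<in>T. \<Sum>u'\<in>T.
       (\<Sum>p\<in>P. X p t * X p t' * cnj (X p u) * cnj (X p u')) *
       (\<Sum>q\<in>Q. Y q t * Y q t' * cnj (Y q u) * cnj (Y q u')))"
    by (simp only: sum_product)
  finally show ?thesis .
qed

lemma double_sum_nonneg_eq_0_iff:
  fixes f :: "'a \<Rightarrow> 'b \<Rightarrow> real"
  assumes "finite A" "finite B" "\<And>a b. a \<in> A \<Longrightarrow> b \<in> B \<Longrightarrow> f a b \<ge> 0"
  shows "(\<Sum>a\<in>A. \<Sum>b\<in>B. f a b) = 0 \<longleftrightarrow> (\<forall>a\<in>A. \<forall>b\<in>B. f a b = 0)"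
  using assms by (simp add: sum_nonneg_eq_0_iff sum_nonneg)

(* Ordered pairs v, v' represent the same vertex of V_n (the same
   2-element multiset) iff they agree up to swapping the components. *)
definition same_vertex :: "nat \<times> nat \<Rightarrow> nat \<times> nat \<Rightarrow> bool" where
  "same_vertex v v' \<longleftrightarrow> v' = v \<or> v' = prod.swap v"

lemma sum_diagonal_pairs:
  "(\<Sum>q\<in>{..<n} \<times> {..<n}. if fst q = snd q then c else 0) = c * real n"
  by (simp add: sum.cartesian_product' sum.delta)

lemma sum_same_vertex:
  "(\<Sum>v\<in>{..<n} \<times> {..<n}. \<Sum>v'\<in>{..<n} \<times> {..<n}. of_bool (same_vertex v v') :: real)
     = 2 * real n ^ 2 - real n"
proof -
  let ?P = "{..<n} \<times> {..<n}"
  have row: "(\<Sum>v'\<in>?P. of_bool (same_vertex v v') :: real) = 2 - (if fst v = snd v then 1 else 0)"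
    if v: "v \<in> ?P" for v
  proof -
    have "?P \<inter> {v'. same_vertex v v'} = {v, prod.swap v}"
      using v by (auto simp: same_vertex_def)
    moreover have "card {v, prod.swap v} = (if fst v = snd v then 1 else 2)"
      by (cases v) auto
    ultimately show ?thesis by simp
  qed
  have "(\<Sum>v\<in>?P. \<Sum>v'\<in>?P. of_bool (same_vertex v v') :: real)
      = (\<Sum>v\<in>?P. 2 - (if fst v = snd v then 1 else 0))"
    by (rule sum.cong[OF refl row])
  also have "\<dots> = 2 * real n ^ 2 - real n"
    by (simp add: sum_subtractf sum_diagonal_pairs power2_eq_square)
  finally show ?thesis .
qed

lemma variance_identity:
  fixes n :: nat and w g :: "nat \<times> nat \<Rightarrow> nat \<times> nat \<Rightarrow> real"
  defines "P \<equiv> {..<n} \<times> {..<n}"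
  assumes second: "\<And>p. p \<in> P \<Longrightarrow> (\<Sum>q\<in>P. w p q) = real n ^ 3"
    and diagonal: "\<And>r q. r < n \<Longrightarrow> q \<in> P \<Longrightarrow> w (r,r) q = (if fst q = snd q then real n ^ 2 else 0)"
    and fourth: "(\<Sum>p\<in>P. \<Sum>q\<in>P. (w p q)^2) = (\<Sum>v\<in>P. \<Sum>v'\<in>P. g v v')"
    and g_same: "\<And>v v'. v \<in> P \<Longrightarrow> v' \<in> P \<Longrightarrow> same_vertex v v' \<Longrightarrow> g v v' = real n ^ 4"
  shows "(\<Sum>p\<in>P. \<Sum>q\<in>P. if fst p \<noteq> snd p then (w p q - real n)^2 else 0)
       = (\<Sum>v\<in>P. \<Sum>v'\<in>P. if same_vertex v v' then 0 else g v v')"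
proof -
  define N where "N = real n"
  have card_P: "card P = n^2" by (simp add: P_def power2_eq_square)
  have row: "(\<Sum>q\<in>P. if fst p \<noteq> snd p then (w p q - N)^2 else 0)
      = (\<Sum>q\<in>P. (w p q)^2) - (N^4 + (if fst p = snd p then N^5 - N^4 else 0))" if p: "p \<in> P" for p
  proof (cases "fst p = snd p")
    case True
    then obtain r where r: "p = (r,r)" "r < n" using p by (cases p) (auto simp: P_def)
    have "(\<Sum>q\<in>P. (w p q)^2) = (\<Sum>q\<in>P. if fst q = snd q then N^4 else 0)"
      using r by (intro sum.cong refl) (simp add: diagonal N_def)
    also have "\<dots> = N^5" by (simp add: P_def sum_diagonal_pairs N_def eval_nat_numeral)
    finally show ?thesis using True by simp
  next
    case False
    have "(\<Sum>q\<in>P. (w p q - N)^2) = (\<Sum>q\<in>P. (w p q)^2) - 2 * N * (\<Sum>q\<in>P. w p q) + N^2 * card P"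
      by (simp add: power2_diff sum_subtractf sum.distrib sum_distrib_left mult_ac)
    also have "\<dots> = (\<Sum>q\<in>P. (w p q)^2) - N^4"
      using second[OF p] card_P by (simp add: N_def eval_nat_numeral)
    finally show ?thesis using False by simp
  qed
  have "(\<Sum>p\<in>P. \<Sum>q\<in>P. if fst p \<noteq> snd p then (w p q - N)^2 else 0)
      = (\<Sum>p\<in>P. (\<Sum>q\<in>P. (w p q)^2) - (N^4 + (if fst p = snd p then N^5 - N^4 else 0)))"
    by (rule sum.cong[OF refl row])
  also have "\<dots> = (\<Sum>p\<in>P. \<Sum>q\<in>P. (w p q)^2) - N^4 * card P
      - (\<Sum>p\<in>P. if fst p = snd p then N^5 - N^4 else 0)"
    by (simp add: sum_subtractf sum.distrib)
  also have "\<dots> = (\<Sum>p\<in>P. \<Sum>q\<in>P. (w p q)^2) - (N^4 * card P + (N^5 - N^4) * N)"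
    unfolding P_def sum_diagonal_pairs N_def by simp
  also have "\<dots> = (\<Sum>v\<in>P. \<Sum>v'\<in>P. g v v') - N^4 * (2 * N^2 - N)"
    using fourth card_P by (simp add: N_def algebra_simps eval_nat_numeral)
  also have "\<dots> = (\<Sum>v\<in>P. \<Sum>v'\<in>P. g v v') - N^4 * (\<Sum>v\<in>P. \<Sum>v'\<in>P. of_bool (same_vertex v v'))"
    by (simp only: P_def sum_same_vertex N_def)
  also have "\<dots> = (\<Sum>v\<in>P. \<Sum>v'\<in>P. g v v' - N^4 * of_bool (same_vertex v v'))"
    by (simp only: sum_subtractf sum_distrib_left)
  also have "\<dots> = (\<Sum>v\<in>P. \<Sum>v'\<in>P. if same_vertex v v' then 0 else g v v')"
    by (intro sum.cong refl) (simp add: g_same N_def)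
  finally show ?thesis unfolding N_def .
qed

lemma variance_criterion:
  fixes n :: nat and w g :: "nat \<times> nat \<Rightarrow> nat \<times> nat \<Rightarrow> real"
  defines "P \<equiv> {..<n} \<times> {..<n}"
  assumes second: "\<And>p. p \<in> P \<Longrightarrow> (\<Sum>q\<in>P. w p q) = real n ^ 3"
    and diagonal: "\<And>r q. r < n \<Longrightarrow> q \<in> P \<Longrightarrow> w (r,r) q = (if fst q = snd q then real n ^ 2 else 0)"
    and fourth: "(\<Sum>p\<in>P. \<Sum>q\<in>P. (w p q)^2) = (\<Sum>v\<in>P. \<Sum>v'\<in>P. g v v')"
    and g_nonneg: "\<And>v v'. 0 \<le> g v v'"
    and g_same: "\<And>v v'. v \<in> P \<Longrightarrow> v' \<in> P \<Longrightarrow> same_vertex v v' \<Longrightarrow> g v v' = real n ^ 4"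
  shows "(\<forall>p\<in>P. \<forall>q\<in>P. fst p \<noteq> snd p \<longrightarrow> w p q = real n)
     \<longleftrightarrow> (\<forall>v\<in>P. \<forall>v'\<in>P. \<not> same_vertex v v' \<longrightarrow> g v v' = 0)"
proof -
  have fin: "finite P" by (simp add: P_def)
  have "(\<forall>p\<in>P. \<forall>q\<in>P. fst p \<noteq> snd p \<longrightarrow> w p q = real n)
      \<longleftrightarrow> (\<forall>p\<in>P. \<forall>q\<in>P. (if fst p \<noteq> snd p then (w p q - real n)^2 else 0) = 0)"
    by auto
  also have "\<dots> \<longleftrightarrow> (\<Sum>p\<in>P. \<Sum>q\<in>P. if fst p \<noteq> snd p then (w p q - real n)^2 else 0) = 0"
    by (rule double_sum_nonneg_eq_0_iff[symmetric]) (simp_all add: fin)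
  also have "\<dots> \<longleftrightarrow> (\<Sum>v\<in>P. \<Sum>v'\<in>P. if same_vertex v v' then 0 else g v v') = 0"
    using variance_identity[of n w g] second diagonal fourth g_same unfolding P_def by simp
  also have "\<dots> \<longleftrightarrow> (\<forall>v\<in>P. \<forall>v'\<in>P. (if same_vertex v v' then 0 else g v v') = 0)"
    by (rule double_sum_nonneg_eq_0_iff) (simp_all add: fin g_nonneg)
  finally show ?thesis by auto
qed

(* rowprod C t (r,s) = conj(c_tr) c_ts, the t-th factor of the column inner
   products of the matrices diag(C e_r) H considered below. *)
definition rowprod :: "complex mat \<Rightarrow> nat \<Rightarrow> nat \<times> nat \<Rightarrow> complex" where
  "rowprod C t p = cnj (C $$ (t, fst p)) * C $$ (t, snd p)"

definition lgram :: "complex mat \<Rightarrow> nat \<times> nat \<Rightarrow> nat \<times> nat \<Rightarrow> complex" where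
  "lgram C v v' = (\<Sum>r<dim_col C.
     cnj (C $$ (fst v, r)) * cnj (C $$ (snd v, r)) * C $$ (fst v', r) * C $$ (snd v', r))"

lemma L_adj_iff_lgram: "L_adj C v v' \<longleftrightarrow> v \<noteq> v' \<and> lgram C v v' = 0"
proof -
  have "cinner (entrywise_prod (row C (fst v)) (row C (snd v)))
          (entrywise_prod (row C (fst v')) (row C (snd v'))) = lgram C v v'"
    unfolding cinner_def entrywise_prod_def lgram_def row_def by (auto intro!: sum.cong simp: mult_ac)
  then show ?thesis unfolding L_adj_def by simp
qed

lemma lgram_swap_left: "lgram C (prod.swap v) v' = lgram C v v'"
  and lgram_swap_right: "lgram C v (prod.swap v') = lgram C v v'"
  unfolding lgram_def by (auto intro!: sum.cong simp: mult_ac)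

lemma unimodular_cnj_mult: "cmod z = 1 \<Longrightarrow> cnj z * z = 1"
  by (metis complex_norm_square mult.commute of_real_1 power_one)

lemma lgram_same_vertex:
  assumes C: "flat_mat C" and v: "fst v < dim_row C" "snd v < dim_row C"
    and same: "same_vertex v v'"
  shows "lgram C v v' = of_nat (dim_col C)"
proof -
  have unit: "cnj (C $$ (i,j)) * C $$ (i,j) = 1" if "i < dim_row C" "j < dim_col C" for i j
    using C that unfolding flat_mat_def by (simp add: unimodular_cnj_mult)
  have "lgram C v v = (\<Sum>r<dim_col C. (cnj (C $$ (fst v, r)) * C $$ (fst v, r)) *
      (cnj (C $$ (snd v, r)) * C $$ (snd v, r)))"
    unfolding lgram_def by (simp add: mult_ac)
  also have "\<dots> = of_nat (dim_col C)" using v by (simp add: unit)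
  finally show ?thesis
    using same lgram_swap_right[of C v v] unfolding same_vertex_def by auto
qed

lemma sum_rowprod_fourth:
  fixes C :: "complex mat"
  defines "P \<equiv> {..<dim_col C} \<times> {..<dim_col C}"
  shows "(\<Sum>p\<in>P. rowprod C t p * rowprod C t' p * cnj (rowprod C u p) * cnj (rowprod C u' p))
       = lgram C (t,t') (u,u') * cnj (lgram C (t,t') (u,u'))"
proof -
  have "lgram C (t,t') (u,u') * cnj (lgram C (t,t') (u,u'))
      = (\<Sum>r<dim_col C. \<Sum>s<dim_col C.
          (cnj (C $$ (t,r)) * cnj (C $$ (t',r)) * C $$ (u,r) * C $$ (u',r)) *
          cnj (cnj (C $$ (t,s)) * cnj (C $$ (t',s)) * C $$ (u,s) * C $$ (u',s)))"
    unfolding lgram_def cnj_sum by (simp add: sum_product)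
  also have "\<dots> = (\<Sum>p\<in>P. rowprod C t p * rowprod C t' p * cnj (rowprod C u p) * cnj (rowprod C u' p))"
    unfolding P_def sum.cartesian_product' rowprod_def by (intro sum.cong refl) (simp add: mult_ac)
  finally show ?thesis ..
qed

lemma sum_rowprod_second:
  fixes C :: "complex mat"
  defines "P \<equiv> {..<dim_col C} \<times> {..<dim_col C}"
  shows "(\<Sum>q\<in>P. rowprod C t q * cnj (rowprod C u q))
       = cinner (row C t) (row C u) * cnj (cinner (row C t) (row C u))"
proof -
  have "cinner (row C t) (row C u) * cnj (cinner (row C t) (row C u))
      = (\<Sum>k<dim_col C. \<Sum>l<dim_col C.
          (cnj (C $$ (t,k)) * C $$ (u,k)) * cnj (cnj (C $$ (t,l)) * C $$ (u,l)))"
    unfolding cinner_def row_def cnj_sum by (simp add: sum_product)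
  also have "\<dots> = (\<Sum>q\<in>P. rowprod C t q * cnj (rowprod C u q))"
    unfolding P_def sum.cartesian_product' rowprod_def by (intro sum.cong refl) (simp add: mult_ac)
  finally show ?thesis ..
qed

definition sort_pair :: "nat \<times> nat \<Rightarrow> nat \<times> nat" where
  "sort_pair v = (if fst v \<le> snd v then v else prod.swap v)"

lemma L_cover_iff_lgram:
  "(\<forall>v\<in>Lverts n. \<forall>v'\<in>Lverts n. v \<noteq> v' \<longrightarrow> L_adj C v v' \<or> L_adj D v v') \<longleftrightarrow>
   (\<forall>v\<in>{..<n} \<times> {..<n}. \<forall>v'\<in>{..<n} \<times> {..<n}.
      \<not> same_vertex v v' \<longrightarrow> lgram C v v' = 0 \<or> lgram D v v' = 0)"
proof
  assume cover: "\<forall>v\<in>Lverts n. \<forall>v'\<in>Lverts n. v \<noteq> v' \<longrightarrow> L_adj C v v' \<or> L_adj D v v'"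
  have lgram_sort: "lgram E (sort_pair v) (sort_pair v') = lgram E v v'" for E v v'
    unfolding sort_pair_def by (simp add: lgram_swap_left lgram_swap_right)
  show "\<forall>v\<in>{..<n} \<times> {..<n}. \<forall>v'\<in>{..<n} \<times> {..<n}.
      \<not> same_vertex v v' \<longrightarrow> lgram C v v' = 0 \<or> lgram D v v' = 0"
  proof (intro ballI impI)
    fix v v' assume v: "v \<in> {..<n} \<times> {..<n}" and v': "v' \<in> {..<n} \<times> {..<n}"
      and distinct: "\<not> same_vertex v v'"
    have "sort_pair v \<in> Lverts n" "sort_pair v' \<in> Lverts n"
      using v v' by (auto simp: sort_pair_def Lverts_def)
    moreover have "sort_pair v \<noteq> sort_pair v'"
      using distinct by (cases v; cases v') (auto simp: sort_pair_def same_vertex_def split: if_splits)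
    ultimately have "lgram C (sort_pair v) (sort_pair v') = 0 \<or> lgram D (sort_pair v) (sort_pair v') = 0"
      using cover by (auto simp: L_adj_iff_lgram)
    then show "lgram C v v' = 0 \<or> lgram D v v' = 0" by (simp only: lgram_sort)
  qed
next
  assume vanish: "\<forall>v\<in>{..<n} \<times> {..<n}. \<forall>v'\<in>{..<n} \<times> {..<n}.
      \<not> same_vertex v v' \<longrightarrow> lgram C v v' = 0 \<or> lgram D v v' = 0"
  show "\<forall>v\<in>Lverts n. \<forall>v'\<in>Lverts n. v \<noteq> v' \<longrightarrow> L_adj C v v' \<or> L_adj D v v'"
  proof (intro ballI impI)
    fix v v' assume v: "v \<in> Lverts n" and v': "v' \<in> Lverts n" and ne: "v \<noteq> v'"
    have "v \<in> {..<n} \<times> {..<n}" "v' \<in> {..<n} \<times> {..<n}"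
      using v v' by (auto simp: Lverts_def)
    moreover have "\<not> same_vertex v v'"
      using v v' ne by (cases v; cases v') (auto simp: Lverts_def same_vertex_def)
    ultimately have "lgram C v v' = 0 \<or> lgram D v v' = 0" using vanish by blast
    then show "L_adj C v v' \<or> L_adj D v v'" using ne by (auto simp: L_adj_iff_lgram)
  qed
qed

(* A square matrix whose rows are orthogonal of equal squared norm c has
   orthogonal columns of squared norm c (one-sided inverses of square
   matrices are two-sided). *)
lemma orthogonal_rows_imp_orthogonal_cols:
  fixes H :: "complex mat" and c :: complex
  assumes H: "H \<in> carrier_mat n n" and c: "c \<noteq> 0"
    and rows: "\<And>t u. t < n \<Longrightarrow> u < n \<Longrightarrow> cinner (row H t) (row H u) = (if t = u then c else 0)"
    and kl: "k < n" "l < n"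
  shows "(\<Sum>t<n. cnj (H $$ (t,k)) * H $$ (t,l)) = (if k = l then c else 0)"
proof -
  define B where "B = mat n n (\<lambda>(i,j). cnj (H $$ (j,i)) / c)"
  have B: "B \<in> carrier_mat n n" unfolding B_def by simp
  have "H * B = 1\<^sub>m n"
  proof (rule eq_matI)
    fix i j assume "i < dim_row (1\<^sub>m n)" "j < dim_col (1\<^sub>m n)"
    then have ij: "i < n" "j < n" by auto
    have "(H * B) $$ (i,j) = (\<Sum>x<n. cnj (H $$ (j,x)) * H $$ (i,x)) / c"
      using H ij unfolding B_def
      by (auto simp: scalar_prod_def lessThan_atLeast0 sum_divide_distrib mult_ac intro!: sum.cong)
    also have "\<dots> = cinner (row H j) (row H i) / c"
      using H ij unfolding cinner_def by (auto intro!: sum.cong)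
    also have "\<dots> = 1\<^sub>m n $$ (i,j)" using rows[OF ij(2,1)] ij c by auto
    finally show "(H * B) $$ (i,j) = 1\<^sub>m n $$ (i,j)" .
  qed (use H B in auto)
  then have BH: "B * H = 1\<^sub>m n" by (rule mat_mult_left_right_inverse[OF H B])
  have "(\<Sum>t<n. cnj (H $$ (t,k)) * H $$ (t,l)) / c = (B * H) $$ (k,l)"
    using H kl unfolding B_def
    by (auto simp: scalar_prod_def lessThan_atLeast0 sum_divide_distrib intro!: sum.cong)
  also have "\<dots> = (if k = l then 1 else 0)" using BH kl by simp
  finally show ?thesis using c by (auto simp: divide_eq_eq split: if_splits)
qed

lemma adjoint_mult_index:
  fixes M :: "complex mat"
  assumes "M \<in> carrier_mat n n" "k < n" "l < n"
  shows "(mat_adjoint M * M) $$ (k,l) = (\<Sum>t<n. cnj (M $$ (t,k)) * M $$ (t,l))"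
  using assms unfolding mat_adjoint_def
  by (auto simp: scalar_prod_def lessThan_atLeast0 mat_of_rows_index intro!: sum.cong)

lemma norm_div_eq_inverse_sqrt_iff:
  fixes x N :: real
  assumes "x \<ge> 0" "N > 0"
  shows "x / N = 1 / sqrt N \<longleftrightarrow> x^2 = N"
proof -
  have "x / N = 1 / sqrt N \<longleftrightarrow> x = N / sqrt N" using assms by (auto simp: field_simps)
  also have "N / sqrt N = sqrt N" using assms by (simp add: real_div_sqrt)
  also have "x = sqrt N \<longleftrightarrow> x^2 = N" using assms by (auto intro: real_sqrt_unique)
  finally show ?thesis .
qed

locale flat_orthogonal_pair =
  fixes n :: nat and A H :: "complex mat"
  assumes A_carrier: "A \<in> carrier_mat n n" and A_flat: "flat_mat A"
    and H_carrier: "H \<in> carrier_mat n n"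
    and H_unimodular: "\<forall>i<n. \<forall>j<n. cmod (H $$ (i,j)) = 1"
    and H_orth: "\<forall>i<n. \<forall>j<n. i \<noteq> j \<longrightarrow> cinner (row H i) (row H j) = 0"
begin

definition family_mat :: "nat \<Rightarrow> complex mat" where
  "family_mat r = mat n n (\<lambda>(l,k). (1 / complex_of_real (sqrt (real n))) * A $$ (l,r) * H $$ (l,k))"

(* n times the inner product of column k of M_r with column l of M_s,
   for p = (r,s) and q = (k,l). *)
definition col_overlap :: "nat \<times> nat \<Rightarrow> nat \<times> nat \<Rightarrow> complex" where
  "col_overlap p q = (\<Sum>t<n. rowprod A t p * rowprod H t q)"

lemma dim_col_A: "dim_col A = n" and dim_col_H: "dim_col H = n"
  using A_carrier H_carrier by auto

lemma H_flat: "flat_mat H"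
  using H_carrier H_unimodular unfolding flat_mat_def by auto

lemma A_unit: "i < n \<Longrightarrow> j < n \<Longrightarrow> cnj (A $$ (i,j)) * A $$ (i,j) = 1"
  using A_flat A_carrier unfolding flat_mat_def by (auto simp: unimodular_cnj_mult)

lemma H_unit: "i < n \<Longrightarrow> j < n \<Longrightarrow> cnj (H $$ (i,j)) * H $$ (i,j) = 1"
  using H_unimodular by (auto simp: unimodular_cnj_mult)

lemma rowprod_A_unit: "t < n \<Longrightarrow> p \<in> {..<n} \<times> {..<n} \<Longrightarrow> rowprod A t p * cnj (rowprod A t p) = 1"
proof -
  assume "t < n" "p \<in> {..<n} \<times> {..<n}"
  moreover have "rowprod A t p * cnj (rowprod A t p) =
      (cnj (A $$ (t, fst p)) * A $$ (t, fst p)) * (cnj (A $$ (t, snd p)) * A $$ (t, snd p))"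
    unfolding rowprod_def by (simp add: mult_ac)
  ultimately show ?thesis by (auto simp: A_unit)
qed

lemma H_row_inner: "t < n \<Longrightarrow> u < n \<Longrightarrow> cinner (row H t) (row H u) = (if t = u then of_nat n else 0)"
  using H_orth H_carrier by (auto simp: cinner_def H_unit)

lemma H_col_inner: "k < n \<Longrightarrow> l < n \<Longrightarrow> (\<Sum>t<n. cnj (H $$ (t,k)) * H $$ (t,l)) = (if k = l then of_nat n else 0)"
  by (rule orthogonal_rows_imp_orthogonal_cols[OF H_carrier _ H_row_inner]) auto

lemma col_overlap_diagonal:
  assumes "r < n" "k < n" "l < n"
  shows "col_overlap (r,r) (k,l) = (if k = l then of_nat n else 0)"
proof -
  have "col_overlap (r,r) (k,l) = (\<Sum>t<n. cnj (H $$ (t,k)) * H $$ (t,l))"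
    unfolding col_overlap_def rowprod_def using assms by (intro sum.cong refl) (simp add: A_unit)
  then show ?thesis using H_col_inner assms by simp
qed

lemma cinner_col_family_mat:
  assumes "k < n" "l < n"
  shows "cinner (col (family_mat r) k) (col (family_mat s) l) = col_overlap (r,s) (k,l) / of_nat n"
proof -
  define c where "c = 1 / complex_of_real (sqrt (real n))"
  have "c = complex_of_real (1 / sqrt (real n))" unfolding c_def by simp
  then have "cnj c * c = complex_of_real (1 / sqrt (real n) * (1 / sqrt (real n)))"
    by (simp only: complex_cnj_complex_of_real of_real_mult)
  also have "\<dots> = complex_of_real (1 / real n)" by (simp add: field_simps)
  also have "\<dots> = 1 / of_nat n" by simp
  finally have cc: "cnj c * c = 1 / of_nat n" .
  have "cinner (col (family_mat r) k) (col (family_mat s) l) = (\<Sum>t<n. cnj (c * A $$ (t,r) * H $$ (t,k)) * (c * A $$ (t,s) * H $$ (t,l)))"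
    using assms unfolding cinner_def family_mat_def c_def by (auto intro!: sum.cong)
  also have "\<dots> = (cnj c * c) * col_overlap (r,s) (k,l)"
    unfolding col_overlap_def rowprod_def sum_distrib_left by (intro sum.cong refl) (simp add: mult_ac)
  finally show ?thesis using cc by simp
qed

lemma family_mat_hadamard:
  assumes r: "r < n"
  shows "complex_hadamard n (family_mat r)"
proof -
  have car: "family_mat r \<in> carrier_mat n n" unfolding family_mat_def by simp
  have entries: "cmod (family_mat r $$ (i,j)) = 1 / sqrt (real n)" if "i < n" "j < n" for i j
    using that r A_flat A_carrier H_unimodular unfolding family_mat_def flat_mat_def
    by (simp add: norm_mult norm_divide)
  have "mat_adjoint (family_mat r) * family_mat r = 1\<^sub>m n"
  proof (rule eq_matI)
    fix k l assume "k < dim_row (1\<^sub>m n)" "l < dim_col (1\<^sub>m n)"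
    then have kl: "k < n" "l < n" by auto
    have "(mat_adjoint (family_mat r) * family_mat r) $$ (k,l) = cinner (col (family_mat r) k) (col (family_mat r) l)"
      using car kl unfolding adjoint_mult_index[OF car kl] cinner_def by (auto intro!: sum.cong)
    also have "\<dots> = 1\<^sub>m n $$ (k,l)"
      using kl r by (simp add: cinner_col_family_mat col_overlap_diagonal)
    finally show "(mat_adjoint (family_mat r) * family_mat r) $$ (k,l) = 1\<^sub>m n $$ (k,l)" .
  qed (use car in \<open>auto simp: mat_adjoint_def\<close>)
  then show ?thesis using car entries unfolding complex_hadamard_def by simp
qed

lemma family_mat_unbiased_iff:
  "mutually_unbiased n (family_mat r) (family_mat s) \<longleftrightarrow> (\<forall>k<n. \<forall>l<n. (cmod (col_overlap (r,s) (k,l)))^2 = real n)"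
proof -
  have "cmod (cinner (col (family_mat r) k) (col (family_mat s) l)) = 1 / sqrt (real n)
      \<longleftrightarrow> (cmod (col_overlap (r,s) (k,l)))^2 = real n" if "k < n" "l < n" for k l
  proof -
    have "cmod (cinner (col (family_mat r) k) (col (family_mat s) l)) = cmod (col_overlap (r,s) (k,l)) / real n"
      using that by (simp add: cinner_col_family_mat norm_divide)
    then show ?thesis using that norm_div_eq_inverse_sqrt_iff[of "cmod (col_overlap (r,s) (k,l))" "real n"]
      by simp
  qed
  then show ?thesis unfolding mutually_unbiased_def by simp
qed

(* For n >= 2, mutually unbiased matrices are distinct; hence the n matrices
   M_r really form a set of n elements. *)
lemma family_mat_distinct:
  assumes "r < n" "s < n" "r \<noteq> s" "mutually_unbiased n (family_mat r) (family_mat s)"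
  shows "family_mat r \<noteq> family_mat s"
proof
  assume "family_mat r = family_mat s"
  then have "mutually_unbiased n (family_mat r) (family_mat r)" using assms(4) by simp
  then have "(cmod (col_overlap (r,r) (0,0)))^2 = real n"
    using assms(1) by (simp add: family_mat_unbiased_iff)
  then have "real n ^ 2 = real n" using assms by (simp add: col_overlap_diagonal)
  then have "n = 1" using assms by (simp add: power2_eq_square)
  then show False using assms by simp
qed

lemma complete_iff_pairwise_unbiased:
  "complete_MUH_system n (family_mat ` {..<n}) \<longleftrightarrow>
     (\<forall>r<n. \<forall>s<n. r \<noteq> s \<longrightarrow> mutually_unbiased n (family_mat r) (family_mat s))"
proof
  assume complete: "complete_MUH_system n (family_mat ` {..<n})"
  then have "card (family_mat ` {..<n}) = card {..<n}" unfolding complete_MUH_system_def by simp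
  then have "inj_on family_mat {..<n}" by (simp add: inj_on_iff_eq_card)
  then show "\<forall>r<n. \<forall>s<n. r \<noteq> s \<longrightarrow> mutually_unbiased n (family_mat r) (family_mat s)"
    using complete unfolding complete_MUH_system_def by (auto dest: inj_onD)
next
  assume pairwise: "\<forall>r<n. \<forall>s<n. r \<noteq> s \<longrightarrow> mutually_unbiased n (family_mat r) (family_mat s)"
  then have "inj_on family_mat {..<n}" by (auto intro!: inj_onI dest: family_mat_distinct)
  then show "complete_MUH_system n (family_mat ` {..<n})"
    using pairwise unfolding complete_MUH_system_def by (auto simp: card_image family_mat_hadamard)
qed

lemma col_overlap_second_moment:
  assumes p: "p \<in> {..<n} \<times> {..<n}"
  shows "(\<Sum>q\<in>{..<n} \<times> {..<n}. (cmod (col_overlap p q))^2) = real n ^ 3"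
proof -
  have "complex_of_real (\<Sum>q\<in>{..<n} \<times> {..<n}. (cmod (col_overlap p q))^2)
      = (\<Sum>t<n. \<Sum>u<n. rowprod A t p * cnj (rowprod A u p) *
          (\<Sum>q\<in>{..<n} \<times> {..<n}. rowprod H t q * cnj (rowprod H u q)))"
    unfolding col_overlap_def of_real_sum complex_norm_square by (rule second_moment_bilinear)
  also have "\<dots> = (\<Sum>t<n. \<Sum>u<n. rowprod A t p * cnj (rowprod A u p) *
          (if t = u then of_nat n ^ 2 else 0))"
    by (intro sum.cong refl) (simp add: sum_rowprod_second[of H, unfolded dim_col_H] H_row_inner power2_eq_square)
  also have "\<dots> = (\<Sum>t<n. of_nat n ^ 2)"
    using p by (intro sum.cong refl) (simp add: if_distrib[of "\<lambda>x. _ * x"] sum.delta rowprod_A_unit cong: if_cong)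
  also have "\<dots> = complex_of_real (real n ^ 3)" by (simp add: power2_eq_square power3_eq_cube)
  finally show ?thesis by (simp only: of_real_eq_iff)
qed

lemma col_overlap_fourth_moment:
  "(\<Sum>p\<in>{..<n} \<times> {..<n}. \<Sum>q\<in>{..<n} \<times> {..<n}. ((cmod (col_overlap p q))^2)^2) =
   (\<Sum>v\<in>{..<n} \<times> {..<n}. \<Sum>v'\<in>{..<n} \<times> {..<n}. (cmod (lgram A v v'))^2 * (cmod (lgram H v v'))^2)"
proof -
  let ?P = "{..<n} \<times> {..<n}"
  have norm4: "complex_of_real (((cmod z)^2)^2) = (z * cnj z)^2" for z
    by (metis complex_norm_square of_real_power)
  have "complex_of_real (\<Sum>p\<in>?P. \<Sum>q\<in>?P. ((cmod (col_overlap p q))^2)^2)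
      = (\<Sum>t<n. \<Sum>t'<n. \<Sum>u<n. \<Sum>u'<n.
          (\<Sum>p\<in>?P. rowprod A t p * rowprod A t' p * cnj (rowprod A u p) * cnj (rowprod A u' p)) *
          (\<Sum>q\<in>?P. rowprod H t q * rowprod H t' q * cnj (rowprod H u q) * cnj (rowprod H u' q)))"
    unfolding col_overlap_def of_real_sum norm4 by (rule fourth_moment_bilinear)
  also have "\<dots> = (\<Sum>t<n. \<Sum>t'<n. \<Sum>u<n. \<Sum>u'<n.
      complex_of_real ((cmod (lgram A (t,t') (u,u')))^2 * (cmod (lgram H (t,t') (u,u')))^2))"
    by (simp only: sum_rowprod_fourth[of A, unfolded dim_col_A] sum_rowprod_fourth[of H, unfolded dim_col_H]
        of_real_mult complex_norm_square)
  also have "\<dots> = complex_of_real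
      (\<Sum>v\<in>?P. \<Sum>v'\<in>?P. (cmod (lgram A v v'))^2 * (cmod (lgram H v v'))^2)"
    by (simp add: sum.cartesian_product')
  finally show ?thesis by (simp only: of_real_eq_iff)
qed

lemma lgram_product_same_vertex:
  assumes "v \<in> {..<n} \<times> {..<n}" "same_vertex v v'"
  shows "(cmod (lgram A v v'))^2 * (cmod (lgram H v v'))^2 = real n ^ 4"
  using assms A_carrier H_carrier
  by (auto simp: lgram_same_vertex[OF A_flat] lgram_same_vertex[OF H_flat] eval_nat_numeral)

end

theorem proposition7:
  fixes n :: nat and A H :: "complex mat"
  assumes A: "A \<in> carrier_mat n n" and A_flat: "flat_mat A"
    and H: "H \<in> carrier_mat n n" and H_flat: "\<forall>i<n. \<forall>j<n. cmod (H $$ (i,j)) = 1"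
    and H_orth: "\<forall>i<n. \<forall>j<n. i \<noteq> j \<longrightarrow> cinner (row H i) (row H j) = 0"
  shows "complete_MUH_system n
           ((\<lambda>r. mat n n (\<lambda>(l,k). (1 / complex_of_real (sqrt (real n))) * A $$ (l,r) * H $$ (l,k))) ` {..<n})
         \<longleftrightarrow> (\<forall>u\<in>Lverts n. \<forall>v\<in>Lverts n. u \<noteq> v \<longrightarrow> L_adj A u v \<or> L_adj H u v)"
proof -
  interpret flat_orthogonal_pair n A H
    using assms by unfold_locales
  let ?P = "{..<n} \<times> {..<n}"
  have "complete_MUH_system n (family_mat ` {..<n})
      \<longleftrightarrow> (\<forall>r<n. \<forall>s<n. r \<noteq> s \<longrightarrow> mutually_unbiased n (family_mat r) (family_mat s))"
    by (rule complete_iff_pairwise_unbiased)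
  also have "\<dots> \<longleftrightarrow> (\<forall>p\<in>?P. \<forall>q\<in>?P. fst p \<noteq> snd p \<longrightarrow> (cmod (col_overlap p q))^2 = real n)"
    by (auto simp: family_mat_unbiased_iff)
  also have "\<dots> \<longleftrightarrow> (\<forall>v\<in>?P. \<forall>v'\<in>?P. \<not> same_vertex v v' \<longrightarrow>
      (cmod (lgram A v v'))^2 * (cmod (lgram H v v'))^2 = 0)"
    by (rule variance_criterion[OF _ _ col_overlap_fourth_moment])
      (auto simp: col_overlap_second_moment col_overlap_diagonal lgram_product_same_vertex)
  also have "\<dots> \<longleftrightarrow> (\<forall>u\<in>Lverts n. \<forall>v\<in>Lverts n. u \<noteq> v \<longrightarrow> L_adj A u v \<or> L_adj H u v)"
    by (simp add: L_cover_iff_lgram)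
  finally show ?thesis by (simp add: family_mat_def[abs_def])
qed

end
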